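(* Fix $0<\eta<\eta'\le 1/8$, let $\lambda=\mathrm{e}^{-1}+\eta$ and $\ell=\lfloor 1/\eta'\rfloor$. Let $N_{\eta'}$ be the number of $(\lambda,1)$-light paths of length $\ell$ in $\mathcal W_n$. Then $\mathbb{E}[N_{\eta'}^2]=(1+o(1))(\mathbb{E}N_{\eta'})^2$ as $n\to\infty$, and consequently $$\lim_{n\to\infty}\mathbb{P}\big(N_{\eta'}\ge 2\,\mathbb{E}N_{\eta'}\big)=0.$$
   Context: $\mathcal W_n$ is the complete graph on $n$ vertices whose edges carry i.i.d. exponential weights $W_e$ with mean $n$. A path of length $\ell$ is a tuple $(v_0,\dots,v_\ell)$ of distinct vertices (paths are counted as ordered tuples), with total weight $W(\pi)=\sum_{i=1}^\ell W_{(v_{i-1},v_i)}$. A path of length $\ell$ is called $(\lambda,C)$-light if $W(\pi)\le\lambda\ell-C\sqrt{\ell}$. *)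

theory Defs
  imports "HOL-Probability.Probability" "HOL-Library.Landau_Symbols"
begin

definition edges :: "nat \<Rightarrow> nat set set" where
  "edges n = {{u, v} | u v. u < n \<and> v < n \<and> u \<noteq> v}"

text \<open>The random weighted complete graph W_n: i.i.d. exponential edge weights with mean n
  (rate 1/n), as a product probability measure over the edges.\<close>
definition WM :: "nat \<Rightarrow> (nat set \<Rightarrow> real) measure" where
  "WM n = PiM (edges n) (\<lambda>e. density lborel (exponential_density (1 / real n)))"

text \<open>Paths of length l: tuples (v_0,...,v_l) of distinct vertices, as lists of length l+1.\<close>
definition paths :: "nat \<Rightarrow> nat \<Rightarrow> nat list set" where
  "paths n l = {p. length p = l + 1 \<and> distinct p \<and> set p \<subseteq> {..<n}}"

definition path_weight :: "(nat set \<Rightarrow> real) \<Rightarrow> nat list \<Rightarrow> real" where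
  "path_weight w p = (\<Sum>i < length p - 1. w {p ! i, p ! Suc i})"

definition light :: "real \<Rightarrow> real \<Rightarrow> (nat set \<Rightarrow> real) \<Rightarrow> nat list \<Rightarrow> bool" where
  "light lam C w p \<longleftrightarrow>
     path_weight w p \<le> lam * real (length p - 1) - C * sqrt (real (length p - 1))"

definition count_light :: "nat \<Rightarrow> real \<Rightarrow> real \<Rightarrow> nat \<Rightarrow> (nat set \<Rightarrow> real) \<Rightarrow> nat" where
  "count_light n lam C l w = card {p \<in> paths n l. light lam C w p}"

end

theory Submission
  imports Defs
begin

text \<open>
  The length \<open>l\<close> stays fixed as \<open>n \<rightarrow> \<infinity>\<close>, and \<open>l \<ge> 8\<close> makes the threshold
  \<open>T = \<lambda> l - \<surd>l\<close> positive. A path is light as soon as each of its \<open>l\<close> edges weighs at most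
  \<open>T / l\<close>, an event of probability at least \<open>(T / (2 l n))^l\<close>; as there are at least
  \<open>(n / 2)^(l + 1)\<close> paths, \<open>\<mu> = E N\<close> grows linearly in \<open>n\<close>.
  In \<open>E N\<^sup>2\<close>, the sum of \<open>P(p and q light)\<close> over pairs of paths, vertex-disjoint pairs are
  independent and contribute at most \<open>\<mu>\<^sup>2\<close>. If \<open>q\<close> meets \<open>p\<close>, then, given that \<open>p\<close> is light,
  every edge of \<open>q\<close> leaving the vertex set of \<open>p\<close> independently has weight at most \<open>T\<close>, an event
  of probability at most \<open>T / n\<close>. There are at least as many such edges as vertices of \<open>q\<close>
  outside \<open>p\<close>, so these factors pay for the \<open>n\<close> choices of each such vertex, and overlapping
  pairs contribute at most \<open>K \<mu>\<close> with \<open>K\<close> independent of \<open>n\<close>. Hence \<open>Var N \<le> K \<mu> = o(\<mu>\<^sup>2)\<close>,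
  and Chebyshev's inequality bounds \<open>P(N \<ge> 2 \<mu>)\<close> by \<open>K / \<mu>\<close>.
\<close>

section \<open>Independent exponential edge weights\<close>

definition exp_weight :: "nat \<Rightarrow> real measure" where
  "exp_weight n = density lborel (exponential_density (1 / real n))"

lemma WM_eq_PiM: "WM n = PiM (edges n) (\<lambda>_. exp_weight n)"
  by (simp add: WM_def exp_weight_def)

lemma sets_exp_weight [simp]: "sets (exp_weight n) = sets borel"
  by (simp add: exp_weight_def)

lemma space_exp_weight [simp]: "space (exp_weight n) = UNIV"
  by (simp add: exp_weight_def)

lemma prob_space_exp_weight: "0 < n \<Longrightarrow> prob_space (exp_weight n)"
  unfolding exp_weight_def by (rule prob_space_exponential_density) simp

lemma finite_edges: "finite (edges n)"
proof -
  have "edges n \<subseteq> Pow {..<n}" by (auto simp: edges_def)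
  then show ?thesis by (rule finite_subset) auto
qed

lemma edges_nonempty: "2 \<le> n \<Longrightarrow> edges n \<noteq> {}"
proof -
  assume "2 \<le> n"
  then have "{0, 1} \<in> edges n" unfolding edges_def by force
  then show ?thesis by blast
qed

lemma finite_product_prob_space_WM:
  "0 < n \<Longrightarrow> finite_product_prob_space (\<lambda>_. exp_weight n) (edges n)"
  using prob_space_exp_weight finite_edges
  unfolding finite_product_prob_space_def product_prob_space_def product_prob_space_axioms_def
    product_sigma_finite_def finite_product_sigma_finite_def finite_product_sigma_finite_axioms_def
  by (auto intro: prob_space_imp_sigma_finite)

lemma prob_space_WM: "0 < n \<Longrightarrow> prob_space (WM n)"
proof -
  assume "0 < n"
  then interpret finite_product_prob_space "\<lambda>_. exp_weight n" "edges n"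
    by (rule finite_product_prob_space_WM)
  show ?thesis unfolding WM_eq_PiM by (rule prob_space_axioms)
qed

lemma measure_exp_weight_atMost:
  assumes "0 < n" "0 \<le> t"
  shows "measure (exp_weight n) {..t} = 1 - exp (- t / real n)"
proof -
  have "emeasure (exp_weight n) {..t} = ennreal (erlang_CDF 0 (1 / real n) t)"
    unfolding exp_weight_def by (rule emeasure_erlang_density) (use assms in simp)
  then show ?thesis using assms by (simp add: measure_def erlang_CDF_def)
qed

lemma AE_WM_pos: assumes "0 < n" shows "AE w in WM n. \<forall>e\<in>edges n. 0 < w e"
proof -
  interpret finite_product_prob_space "\<lambda>_. exp_weight n" "edges n"
    by (rule finite_product_prob_space_WM[OF assms])
  have "emeasure (exp_weight n) {..0} = ennreal (erlang_CDF 0 (1 / real n) 0)"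
    unfolding exp_weight_def by (rule emeasure_erlang_density) (use assms in simp)
  then have "{..0} \<in> null_sets (exp_weight n)" by (simp add: erlang_CDF_at0 null_sets_def)
  then have "AE x in exp_weight n. 0 < x" by (rule AE_I') auto
  then show ?thesis unfolding WM_eq_PiM
    using finite_edges by (intro AE_finite_allI) (auto intro: AE_component)
qed

lemma indep_vars_WM_components:
  assumes "0 < n" "edges n \<noteq> {}"
  shows "prob_space.indep_vars (WM n) (\<lambda>_. exp_weight n) (\<lambda>e w. w e) (edges n)"
proof -
  interpret finite_product_prob_space "\<lambda>_. exp_weight n" "edges n"
    by (rule finite_product_prob_space_WM[OF assms(1)])
  interpret W: prob_space "WM n" by (rule prob_space_WM[OF assms(1)])
  have "distr (WM n) (PiM (edges n) (\<lambda>_. exp_weight n)) (\<lambda>x. \<lambda>i\<in>edges n. x i)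
      = distr (WM n) (PiM (edges n) (\<lambda>_. exp_weight n)) (\<lambda>x. x)"
    by (rule distr_cong) (auto simp: WM_eq_PiM space_PiM)
  also have "\<dots> = PiM (edges n) (\<lambda>_. exp_weight n)" unfolding WM_eq_PiM by (rule distr_id)
  also have "\<dots> = PiM (edges n) (\<lambda>i. distr (WM n) (exp_weight n) (\<lambda>x. x i))"
    by (rule PiM_cong) (auto simp: WM_eq_PiM PiM_component)
  finally show ?thesis
    by (subst W.indep_vars_iff_distr_eq_PiM'[OF assms(2)]) (auto simp: WM_eq_PiM)
qed

lemma prob_WM_restrict_disjoint:
  assumes n: "0 < n" "edges n \<noteq> {}" and J: "J1 \<subseteq> edges n" "J2 \<subseteq> edges n" "J1 \<inter> J2 = {}"
    and A: "A \<in> sets (PiM J1 (\<lambda>_. exp_weight n))" and B: "B \<in> sets (PiM J2 (\<lambda>_. exp_weight n))"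
  shows "measure (WM n) {w \<in> space (WM n). restrict w J1 \<in> A \<and> restrict w J2 \<in> B}
       = measure (WM n) {w \<in> space (WM n). restrict w J1 \<in> A}
       * measure (WM n) {w \<in> space (WM n). restrict w J2 \<in> B}"
proof -
  interpret W: prob_space "WM n" by (rule prob_space_WM[OF n(1)])
  define K where "K = (\<lambda>b::bool. if b then J1 else J2)"
  define AB where "AB = (\<lambda>b::bool. if b then A else B)"
  have "W.indep_vars (\<lambda>j. PiM (K j) (\<lambda>_. exp_weight n)) (\<lambda>j w. restrict (\<lambda>i. w i) (K j)) UNIV"
    by (rule W.indep_vars_restrict[OF indep_vars_WM_components[OF n]])
       (use J in \<open>auto simp: K_def disjoint_family_on_def\<close>)
  then have "W.prob (\<Inter>j\<in>UNIV. (\<lambda>w. restrict (\<lambda>i. w i) (K j)) -` AB j \<inter> space (WM n))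
      = (\<Prod>j\<in>UNIV. W.prob ((\<lambda>w. restrict (\<lambda>i. w i) (K j)) -` AB j \<inter> space (WM n)))"
    by (rule W.indep_varsD) (use A B in \<open>auto simp: AB_def K_def\<close>)
  moreover have "(\<Inter>j\<in>UNIV. (\<lambda>w. restrict (\<lambda>i. w i) (K j)) -` AB j \<inter> space (WM n))
      = {w \<in> space (WM n). restrict w J1 \<in> A \<and> restrict w J2 \<in> B}"
    by (auto simp: UNIV_bool AB_def K_def)
  ultimately show ?thesis
    by (simp add: UNIV_bool AB_def K_def vimage_def Int_def conj_commute)
qed

section \<open>Edges of a path\<close>

fun path_edges :: "nat list \<Rightarrow> nat set set" where
  "path_edges (x # y # r) = insert {x, y} (path_edges (y # r))"
| "path_edges _ = {}"

lemma path_weight_Nil [simp]: "path_weight w [] = 0"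
  by (simp add: path_weight_def)

lemma path_weight_singleton [simp]: "path_weight w [x] = 0"
  by (simp add: path_weight_def)

lemma path_weight_Cons_Cons [simp]:
  "path_weight w (x # y # r) = w {x, y} + path_weight w (y # r)"
proof -
  have "path_weight w (x # y # r) = (\<Sum>i<Suc (length r). w {(x # y # r) ! i, (x # y # r) ! Suc i})"
    by (simp add: path_weight_def)
  also have "\<dots> = w {x, y} + (\<Sum>i<length r. w {(y # r) ! i, (y # r) ! Suc i})"
    by (subst sum.lessThan_Suc_shift) simp
  finally show ?thesis by (simp add: path_weight_def)
qed

lemma path_weight_cong:
  "(\<And>e. e \<in> path_edges p \<Longrightarrow> w e = w' e) \<Longrightarrow> path_weight w p = path_weight w' p"
  by (induction p rule: path_edges.induct) auto

lemma path_weight_le: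
  "(\<And>e. e \<in> path_edges p \<Longrightarrow> w e \<le> s) \<Longrightarrow> path_weight w p \<le> s * real (length p - 1)"
proof (induction p rule: path_edges.induct)
  case (1 x y r)
  then have "path_weight w (y # r) \<le> s * real (length (y # r) - 1)" "w {x, y} \<le> s" by auto
  then show ?case by (simp add: algebra_simps)
qed auto

lemma path_weight_nonneg: "(\<And>e. e \<in> path_edges p \<Longrightarrow> 0 \<le> w e) \<Longrightarrow> 0 \<le> path_weight w p"
  by (induction p rule: path_edges.induct) auto

lemma weight_le_path_weight:
  "(\<And>e. e \<in> path_edges p \<Longrightarrow> 0 \<le> w e) \<Longrightarrow> e \<in> path_edges p \<Longrightarrow> w e \<le> path_weight w p"
proof (induction p rule: path_edges.induct)
  case (1 x y r)
  then have "0 \<le> path_weight w (y # r)" "0 \<le> w {x, y}"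
    by (auto intro: path_weight_nonneg)
  moreover have "w e \<le> path_weight w (y # r)" if "e \<noteq> {x, y}"
    using 1 that by auto
  ultimately show ?case by (cases "e = {x, y}") auto
qed auto

lemma finite_path_edges: "finite (path_edges p)"
  by (induction p rule: path_edges.induct) auto

lemma path_edge_subset: "e \<in> path_edges p \<Longrightarrow> e \<subseteq> set p"
  by (induction p rule: path_edges.induct) auto

lemma path_edge_nonempty: "e \<in> path_edges p \<Longrightarrow> e \<noteq> {}"
  by (induction p rule: path_edges.induct) auto

lemma card_path_edges: "card (path_edges p) \<le> length p - 1"
proof (induction p rule: path_edges.induct)
  case (1 x y r)
  have "card (path_edges (x # y # r)) \<le> Suc (card (path_edges (y # r)))"
    by (simp add: card_insert_if finite_path_edges)
  with 1 show ?case by simp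
qed auto

lemma path_edges_paths: "p \<in> paths n l \<Longrightarrow> path_edges p \<subseteq> edges n"
proof -
  have "distinct p \<Longrightarrow> set p \<subseteq> {..<n} \<Longrightarrow> path_edges p \<subseteq> edges n"
    by (induction p rule: path_edges.induct) (auto simp: edges_def)
  then show "p \<in> paths n l \<Longrightarrow> path_edges p \<subseteq> edges n" by (simp add: paths_def)
qed

lemma path_edges_disjoint: "set p \<inter> set q = {} \<Longrightarrow> path_edges p \<inter> path_edges q = {}"
  using path_edge_subset path_edge_nonempty by blast

fun leaving_edges :: "nat set \<Rightarrow> nat list \<Rightarrow> nat set set" where
  "leaving_edges V (x # y # r) =
     (if x \<notin> V \<or> y \<notin> V then insert {x, y} (leaving_edges V (y # r)) else leaving_edges V (y # r))"
| "leaving_edges V _ = {}"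

fun num_leaving :: "nat set \<Rightarrow> nat list \<Rightarrow> nat" where
  "num_leaving V (x # y # r) = (if x \<notin> V \<or> y \<notin> V then 1 else 0) + num_leaving V (y # r)"
| "num_leaving V _ = 0"

lemma leaving_edges_subset: "leaving_edges V q \<subseteq> path_edges q"
  by (induction V q rule: leaving_edges.induct) auto

lemma leaving_edge_not_subset: "e \<in> leaving_edges V q \<Longrightarrow> \<not> e \<subseteq> V"
  by (induction V q rule: leaving_edges.induct) (auto split: if_splits)

lemma card_leaving_edges: "distinct q \<Longrightarrow> card (leaving_edges V q) = num_leaving V q"
proof (induction V q rule: leaving_edges.induct)
  case (1 V x y r)
  have "{x, y} \<notin> leaving_edges V (y # r)"
    using 1(3) leaving_edges_subset path_edge_subset by fastforce
  then show ?case
    using 1 finite_subset[OF leaving_edges_subset finite_path_edges] by auto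
qed auto

text \<open>
  A path through \<open>V\<close> leaves \<open>V\<close> at least once for every vertex it visits outside \<open>V\<close>;
  the first conjunct only strengthens the induction.
\<close>

lemma length_filter_outside_le_num_leaving:
  "(q \<noteq> [] \<longrightarrow> length (filter (\<lambda>x. x \<notin> V) q) \<le> num_leaving V q + 1)
   \<and> ((\<exists>x\<in>set q. x \<in> V) \<longrightarrow> length (filter (\<lambda>x. x \<notin> V) q) \<le> num_leaving V q)"
  by (induction V q rule: num_leaving.induct) auto

lemma measurable_component_exp_weight:
  "i \<in> J \<Longrightarrow> (\<lambda>v. v i) \<in> borel_measurable (PiM J (\<lambda>_. exp_weight n))"
  using measurable_component_singleton[of i J "\<lambda>_. exp_weight n"]
  by (simp add: measurable_cong_sets[OF refl sets_exp_weight])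

lemma measurable_path_weight:
  "path_edges p \<subseteq> J \<Longrightarrow> (\<lambda>v. path_weight v p) \<in> borel_measurable (PiM J (\<lambda>_. exp_weight n))"
  by (induction p rule: path_edges.induct) (auto intro!: borel_measurable_add measurable_component_exp_weight)

lemma sets_all_le:
  assumes "F \<subseteq> J" "finite F"
  shows "{v \<in> space (PiM J (\<lambda>_. exp_weight n)). \<forall>e\<in>F. v e \<le> t} \<in> sets (PiM J (\<lambda>_. exp_weight n))"
  using assms(2) by (intro sets.sets_Collect_finite_All borel_measurable_le
      measurable_component_exp_weight borel_measurable_const) (use assms(1) in auto)

lemma restrict_in_space_PiM:
  "w \<in> space (WM n) \<Longrightarrow> J \<subseteq> edges n \<Longrightarrow> restrict w J \<in> space (PiM J (\<lambda>_. exp_weight n))"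
  by (auto simp: WM_eq_PiM space_PiM PiE_iff)

lemma prob_WM_all_le:
  assumes n: "0 < n" "edges n \<noteq> {}" and F: "F \<subseteq> edges n" and t: "0 \<le> t"
  shows "measure (WM n) {w \<in> space (WM n). \<forall>e\<in>F. w e \<le> t} = (1 - exp (- t / real n)) ^ card F"
proof -
  interpret W: prob_space "WM n" by (rule prob_space_WM[OF n(1)])
  have "finite F" using F finite_edges finite_subset by blast
  then show ?thesis using F
  proof (induction F rule: finite_induct)
    case empty
    show ?case by (simp add: W.prob_space)
  next
    case (insert e F)
    let ?box = "\<lambda>J. {v \<in> space (PiM J (\<lambda>_. exp_weight n)). \<forall>e'\<in>J. v e' \<le> t}"
    have e: "e \<in> edges n" and Fe: "F \<subseteq> edges n" using insert by auto
    have restrict_box: "{w \<in> space (WM n). restrict w J \<in> ?box J} = {w \<in> space (WM n). \<forall>e'\<in>J. w e' \<le> t}"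
      if "J \<subseteq> edges n" for J
      using restrict_in_space_PiM[OF _ that] by auto
    have "measure (WM n) {w \<in> space (WM n). \<forall>e'\<in>insert e F. w e' \<le> t}
        = measure (WM n) {w \<in> space (WM n). restrict w {e} \<in> ?box {e} \<and> restrict w F \<in> ?box F}"
      using restrict_in_space_PiM[of _ n "{e}"] restrict_in_space_PiM[of _ n F] e Fe
      by (intro arg_cong[where f = "measure (WM n)"]) auto
    also have "\<dots> = measure (WM n) {w \<in> space (WM n). restrict w {e} \<in> ?box {e}}
        * measure (WM n) {w \<in> space (WM n). restrict w F \<in> ?box F}"
      by (rule prob_WM_restrict_disjoint[OF n _ _ _ sets_all_le sets_all_le]) (use insert e in auto)
    also have "measure (WM n) {w \<in> space (WM n). restrict w {e} \<in> ?box {e}} = 1 - exp (- t / real n)"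
    proof -
      interpret finite_product_prob_space "\<lambda>_. exp_weight n" "edges n"
        by (rule finite_product_prob_space_WM[OF n(1)])
      have "emeasure (WM n) {w \<in> space (WM n). w e \<in> {..t}} = emeasure (exp_weight n) {..t}"
        unfolding WM_eq_PiM by (rule emeasure_PiM_Collect_single) (use e in auto)
      then show ?thesis
        using restrict_box[of "{e}"] e measure_exp_weight_atMost[OF n(1) t] by (simp add: measure_def)
    qed
    also have "measure (WM n) {w \<in> space (WM n). restrict w F \<in> ?box F}
        = (1 - exp (- t / real n)) ^ card F"
      unfolding restrict_box[OF Fe] by (rule insert.IH[OF Fe])
    finally show ?case using insert(1,2) by simp
  qed
qed

definition light_event :: "nat \<Rightarrow> real \<Rightarrow> real \<Rightarrow> nat list \<Rightarrow> (nat set \<Rightarrow> real) set" where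
  "light_event n lam C p = {w \<in> space (WM n). light lam C w p}"

definition light_on_path_edges :: "nat \<Rightarrow> real \<Rightarrow> real \<Rightarrow> nat list \<Rightarrow> (nat set \<Rightarrow> real) set" where
  "light_on_path_edges n lam C p =
     {v \<in> space (PiM (path_edges p) (\<lambda>_. exp_weight n)). light lam C v p}"

lemma sets_light_on_path_edges:
  "light_on_path_edges n lam C p \<in> sets (PiM (path_edges p) (\<lambda>_. exp_weight n))"
  unfolding light_on_path_edges_def light_def
  by (intro borel_measurable_le measurable_path_weight borel_measurable_const) simp

lemma light_event_Int_space: "light_event n lam C p \<inter> space (WM n) = light_event n lam C p"
  by (auto simp: light_event_def)

lemma sets_light_event: "p \<in> paths n l \<Longrightarrow> light_event n lam C p \<in> sets (WM n)"
  unfolding light_event_def light_def WM_eq_PiM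
  by (intro borel_measurable_le measurable_path_weight borel_measurable_const path_edges_paths)

lemma light_event_eq_restrict:
  assumes "p \<in> paths n l"
  shows "light_event n lam C p
    = {w \<in> space (WM n). restrict w (path_edges p) \<in> light_on_path_edges n lam C p}"
proof -
  have "light lam C (restrict w (path_edges p)) p \<longleftrightarrow> light lam C w p" for w
    by (simp add: light_def path_weight_cong[of p "restrict w (path_edges p)" w])
  then show ?thesis
    using restrict_in_space_PiM path_edges_paths[OF assms]
    unfolding light_event_def light_on_path_edges_def by blast
qed

lemma prob_light_event_disjoint:
  assumes n: "0 < n" "edges n \<noteq> {}" and p: "p \<in> paths n l" and q: "q \<in> paths n l"
    and pq: "set p \<inter> set q = {}"
  shows "measure (WM n) (light_event n lam C p \<inter> light_event n lam C q)
       = measure (WM n) (light_event n lam C p) * measure (WM n) (light_event n lam C q)"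
proof -
  have "light_event n lam C p \<inter> light_event n lam C q = {w \<in> space (WM n).
      restrict w (path_edges p) \<in> light_on_path_edges n lam C p
      \<and> restrict w (path_edges q) \<in> light_on_path_edges n lam C q}"
    unfolding light_event_eq_restrict[OF p] light_event_eq_restrict[OF q] by blast
  then show ?thesis
    unfolding light_event_eq_restrict[OF p] light_event_eq_restrict[OF q]
    using prob_WM_restrict_disjoint[OF n path_edges_paths[OF p] path_edges_paths[OF q]
        path_edges_disjoint[OF pq] sets_light_on_path_edges sets_light_on_path_edges]
    by simp
qed

lemma prob_light_event_Int_all_le:
  assumes n: "0 < n" "edges n \<noteq> {}" and p: "p \<in> paths n l"
    and F: "F \<subseteq> edges n" "path_edges p \<inter> F = {}" and t: "0 \<le> t"
  shows "measure (WM n) (light_event n lam C p \<inter> {w \<in> space (WM n). \<forall>e\<in>F. w e \<le> t})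
       = measure (WM n) (light_event n lam C p) * (1 - exp (- t / real n)) ^ card F"
proof -
  have finF: "finite F" using F(1) finite_edges finite_subset by blast
  define B where "B = {v \<in> space (PiM F (\<lambda>_. exp_weight n)). \<forall>e\<in>F. v e \<le> t}"
  have B_eq: "{w \<in> space (WM n). restrict w F \<in> B} = {w \<in> space (WM n). \<forall>e\<in>F. w e \<le> t}"
    unfolding B_def using restrict_in_space_PiM[OF _ F(1)] by auto
  have "measure (WM n) (light_event n lam C p \<inter> {w \<in> space (WM n). \<forall>e\<in>F. w e \<le> t})
      = measure (WM n) {w \<in> space (WM n).
          restrict w (path_edges p) \<in> light_on_path_edges n lam C p \<and> restrict w F \<in> B}"
    unfolding light_event_eq_restrict[OF p] B_eq[symmetric]
    by (rule arg_cong[where f = "measure (WM n)"]) blast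
  also have "\<dots> = measure (WM n) (light_event n lam C p)
      * measure (WM n) {w \<in> space (WM n). \<forall>e\<in>F. w e \<le> t}"
    unfolding light_event_eq_restrict[OF p] B_eq[symmetric]
    by (rule prob_WM_restrict_disjoint[OF n path_edges_paths[OF p] F sets_light_on_path_edges])
       (simp add: B_def sets_all_le finF)
  also have "measure (WM n) {w \<in> space (WM n). \<forall>e\<in>F. w e \<le> t} = (1 - exp (- t / real n)) ^ card F"
    by (rule prob_WM_all_le[OF n F(1) t])
  finally show ?thesis .
qed

lemma weight_le_if_light:
  assumes "light lam C w q" "length q = l + 1" "\<And>e. e \<in> path_edges q \<Longrightarrow> 0 \<le> w e"
    and "e \<in> path_edges q"
  shows "w e \<le> lam * real l - C * sqrt (real l)"
  using weight_le_path_weight[of q w e] assms by (simp add: light_def)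

text \<open>
  Given that \<open>p\<close> is light, the edges of \<open>q\<close> leaving \<open>set p\<close> have independent weights, and
  each of them must be at most \<open>T\<close> if \<open>q\<close> is light too.
\<close>

lemma prob_light_event_overlap:
  assumes n: "0 < n" "edges n \<noteq> {}" and p: "p \<in> paths n l" and q: "q \<in> paths n l"
    and T: "T = lam * real l - C * sqrt (real l)" "0 \<le> T"
  shows "measure (WM n) (light_event n lam C p \<inter> light_event n lam C q)
    \<le> measure (WM n) (light_event n lam C p) * (1 - exp (- T / real n)) ^ num_leaving (set p) q"
proof -
  interpret W: prob_space "WM n" by (rule prob_space_WM[OF n(1)])
  define F where "F = leaving_edges (set p) q"
  have Fq: "F \<subseteq> path_edges q" unfolding F_def by (rule leaving_edges_subset)
  have Fe: "F \<subseteq> edges n" using Fq path_edges_paths[OF q] by blast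
  have disj: "path_edges p \<inter> F = {}"
    using path_edge_subset leaving_edge_not_subset unfolding F_def by blast
  let ?box = "{w \<in> space (WM n). \<forall>e\<in>F. w e \<le> T}"
  have box_sets: "?box \<in> sets (WM n)"
    unfolding WM_eq_PiM using Fe finite_subset[OF Fe finite_edges] by (rule sets_all_le)
  have "AE w in WM n. w \<in> light_event n lam C p \<inter> light_event n lam C q
      \<longrightarrow> w \<in> light_event n lam C p \<inter> ?box"
    using AE_WM_pos[OF n(1)]
  proof (rule AE_mp, intro AE_I2 impI)
    fix w assume pos: "\<forall>e\<in>edges n. 0 < w e"
      and pq: "w \<in> light_event n lam C p \<inter> light_event n lam C q"
    have "w e \<le> T" if "e \<in> F" for e
    proof (rule weight_le_if_light[of lam C w q l, folded T(1)])
      show "light lam C w q" using pq by (simp add: light_event_def)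
      show "length q = l + 1" using q by (simp add: paths_def)
      show "0 \<le> w e'" if "e' \<in> path_edges q" for e'
        using pos path_edges_paths[OF q] that by (meson less_imp_le subsetD)
      show "e \<in> path_edges q" using \<open>e \<in> F\<close> Fq by blast
    qed
    then show "w \<in> light_event n lam C p \<inter> ?box" using pq by (auto simp: light_event_def)
  qed
  then have "measure (WM n) (light_event n lam C p \<inter> light_event n lam C q)
      \<le> measure (WM n) (light_event n lam C p \<inter> ?box)"
    by (rule W.finite_measure_mono_AE) (intro sets.Int sets_light_event[OF p] box_sets)
  also have "\<dots> = measure (WM n) (light_event n lam C p) * (1 - exp (- T / real n)) ^ card F"
    by (rule prob_light_event_Int_all_le[OF n p Fe disj T(2)])
  also have "card F = num_leaving (set p) q"
    unfolding F_def by (rule card_leaving_edges) (use q in \<open>simp add: paths_def\<close>)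
  finally show ?thesis by simp
qed

lemma prob_light_event_ge:
  assumes n: "0 < n" "edges n \<noteq> {}" and p: "p \<in> paths n l" and l: "0 < l"
    and T: "T = lam * real l - C * sqrt (real l)" "0 \<le> T"
  shows "(1 - exp (- (T / real l) / real n)) ^ l \<le> measure (WM n) (light_event n lam C p)"
proof -
  interpret W: prob_space "WM n" by (rule prob_space_WM[OF n(1)])
  have lp: "length p - 1 = l" using p by (simp add: paths_def)
  have sub: "{w \<in> space (WM n). \<forall>e\<in>path_edges p. w e \<le> T / real l} \<subseteq> light_event n lam C p"
  proof
    fix w assume w: "w \<in> {w \<in> space (WM n). \<forall>e\<in>path_edges p. w e \<le> T / real l}"
    then have "path_weight w p \<le> T / real l * real l"
      using path_weight_le[of p w "T / real l"] lp by auto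
    then show "w \<in> light_event n lam C p" using w T(1) lp l by (simp add: light_event_def light_def)
  qed
  have "(1 - exp (- (T / real l) / real n)) ^ l \<le> (1 - exp (- (T / real l) / real n)) ^ card (path_edges p)"
    by (rule power_decreasing) (use card_path_edges[of p] lp T(2) n in auto)
  also have "\<dots> = measure (WM n) {w \<in> space (WM n). \<forall>e\<in>path_edges p. w e \<le> T / real l}"
    by (rule prob_WM_all_le[symmetric]) (use n path_edges_paths[OF p] T(2) l in auto)
  also have "\<dots> \<le> measure (WM n) (light_event n lam C p)"
    by (rule W.finite_measure_mono[OF sub sets_light_event[OF p]])
  finally show ?thesis .
qed

section \<open>Counting paths\<close>

lemma finite_paths: "finite (paths n l)"
proof (rule finite_subset)
  show "paths n l \<subseteq> {xs. set xs \<subseteq> {..<n} \<and> length xs = l + 1}" by (auto simp: paths_def)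
qed (rule finite_lists_length_eq, simp)

lemma card_paths_ge: "l + 1 \<le> n \<Longrightarrow> (real n - real l) ^ (l + 1) \<le> real (card (paths n l))"
proof -
  assume a: "l + 1 \<le> n"
  have "card (paths n l) = \<Prod>{n - (l + 1) + 1 .. n}"
    unfolding paths_def using card_lists_distinct_length_eq[of "{..<n}" "l + 1"] a by simp
  also have "{n - (l + 1) + 1 .. n} = {n - l .. n}" using a by auto
  finally have "real (card (paths n l)) = (\<Prod>i\<in>{n - l .. n}. real i)" by simp
  moreover have "(\<Prod>i\<in>{n - l .. n}. real n - real l) \<le> (\<Prod>i\<in>{n - l .. n}. real i)"
    by (rule prod_mono) (use a in auto)
  moreover have "card {n - l .. n} = l + 1" using a by simp
  ultimately show ?thesis by simp
qed

lemma sum_prod_list_lists_length: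
  fixes \<psi> :: "'a \<Rightarrow> real"
  assumes "finite A"
  shows "(\<Sum>q\<in>{xs. set xs \<subseteq> A \<and> length xs = m}. prod_list (map \<psi> q)) = (\<Sum>u\<in>A. \<psi> u) ^ m"
proof (induction m)
  case 0
  have "{xs. set xs \<subseteq> A \<and> length xs = 0} = {[]}" by auto
  then show ?case by simp
next
  case (Suc m)
  let ?S = "{xs. set xs \<subseteq> A \<and> length xs = m}"
  have inj: "inj_on (\<lambda>(xs, u). u # xs) (?S \<times> A)" by (auto simp: inj_on_def)
  have "(\<Sum>q\<in>{xs. set xs \<subseteq> A \<and> length xs = Suc m}. prod_list (map \<psi> q))
      = (\<Sum>z\<in>?S \<times> A. prod_list (map \<psi> ((\<lambda>(xs, u). u # xs) z)))"
    unfolding lists_length_Suc_eq by (rule sum.reindex[OF inj, unfolded comp_def])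
  also have "\<dots> = (\<Sum>xs\<in>?S. \<Sum>u\<in>A. \<psi> u * prod_list (map \<psi> xs))"
    by (simp add: sum.cartesian_product case_prod_unfold)
  also have "\<dots> = (\<Sum>xs\<in>?S. prod_list (map \<psi> xs)) * (\<Sum>u\<in>A. \<psi> u)"
    by (simp add: sum_distrib_right sum_distrib_left mult.commute)
  finally show ?case using Suc by simp
qed

lemma power_num_leaving_le:
  fixes a T :: real
  assumes q: "length q = l + 1" "V \<inter> set q \<noteq> {}"
    and a: "0 \<le> a" "a \<le> 1" "a \<le> T / real n" and T: "0 \<le> T"
  shows "a ^ num_leaving V q \<le> (max 1 T) ^ (l + 1) * (1 / real n) ^ length (filter (\<lambda>x. x \<notin> V) q)"
proof -
  define k where "k = length (filter (\<lambda>x. x \<notin> V) q)"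
  have "k \<le> num_leaving V q"
    using length_filter_outside_le_num_leaving[of q V] q(2) unfolding k_def by blast
  have "k \<le> l + 1" using q(1) length_filter_le[of "\<lambda>x. x \<notin> V" q] by (simp add: k_def)
  have "a ^ num_leaving V q \<le> a ^ k" by (rule power_decreasing) fact+
  also have "\<dots> \<le> (T / real n) ^ k" by (rule power_mono[OF a(3) a(1)])
  also have "\<dots> = T ^ k * (1 / real n) ^ k" by (simp add: power_divide)
  also have "T ^ k \<le> (max 1 T) ^ k" by (rule power_mono) (use T in auto)
  also have "\<dots> \<le> (max 1 T) ^ (l + 1)" by (rule power_increasing[OF \<open>k \<le> l + 1\<close>]) simp
  finally show ?thesis unfolding k_def by (simp add: mult_right_mono)
qed

text \<open>
  Weight \<open>1\<close> for vertices of \<open>p\<close> and \<open>1/n\<close> for the others: summing over all vertex tuples gives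
  at most \<open>(l + 2)\<^sup>l\<^sup>+\<^sup>1\<close>, and each factor \<open>a \<le> T/n\<close> per leaving edge pays for one \<open>1/n\<close>.
\<close>

lemma sum_overlapping_paths_le:
  assumes n: "0 < n" and p: "p \<in> paths n l"
    and a: "0 \<le> a" "a \<le> 1" "a \<le> T / real n" and T: "0 \<le> T"
  shows "(\<Sum>q \<in> {q \<in> paths n l. set p \<inter> set q \<noteq> {}}. a ^ num_leaving (set p) q)
    \<le> (max 1 T) ^ (l + 1) * (real l + 2) ^ (l + 1)"
proof -
  define V where "V = set p"
  define \<psi> where "\<psi> = (\<lambda>u. if u \<in> V then 1 else 1 / real n)"
  define L where "L = {xs. set xs \<subseteq> {..<n} \<and> length xs = l + 1}"
  have \<psi>_nonneg: "0 \<le> prod_list (map \<psi> q)" for q unfolding \<psi>_def by (induction q) auto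
  have term_le: "a ^ num_leaving V q \<le> (max 1 T) ^ (l + 1) * prod_list (map \<psi> q)"
    if q: "q \<in> paths n l" "V \<inter> set q \<noteq> {}" for q
  proof -
    have "prod_list (map \<psi> q) = (1 / real n) ^ length (filter (\<lambda>x. x \<notin> V) q)"
      unfolding \<psi>_def by (induction q) auto
    with power_num_leaving_le[OF _ q(2) a T] q(1) show ?thesis by (simp add: paths_def)
  qed
  have sum_\<psi>: "(\<Sum>u<n. \<psi> u) \<le> real l + 2"
  proof -
    have "(\<Sum>u<n. \<psi> u) \<le> (\<Sum>u<n. (if u \<in> V then 1 else 0) + 1 / real n)"
      by (rule sum_mono) (auto simp: \<psi>_def)
    also have "\<dots> = real (card ({..<n} \<inter> V)) + 1"
      using n by (simp add: sum.distrib sum.If_cases)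
    also have "card ({..<n} \<inter> V) \<le> l + 1"
      using card_mono[of V "{..<n} \<inter> V"] card_length[of p] p by (auto simp: V_def paths_def)
    finally show ?thesis by simp
  qed
  have "(\<Sum>q \<in> {q \<in> paths n l. set p \<inter> set q \<noteq> {}}. a ^ num_leaving (set p) q)
      \<le> (\<Sum>q \<in> {q \<in> paths n l. set p \<inter> set q \<noteq> {}}. (max 1 T) ^ (l + 1) * prod_list (map \<psi> q))"
    by (rule sum_mono) (use term_le in \<open>auto simp: V_def\<close>)
  also have "\<dots> \<le> (\<Sum>q \<in> L. (max 1 T) ^ (l + 1) * prod_list (map \<psi> q))"
    by (rule sum_mono2) (auto simp: L_def paths_def \<psi>_nonneg intro: finite_lists_length_eq)
  also have "\<dots> = (max 1 T) ^ (l + 1) * (\<Sum>u<n. \<psi> u) ^ (l + 1)"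
    unfolding L_def sum_distrib_left[symmetric] by (subst sum_prod_list_lists_length) auto
  also have "\<dots> \<le> (max 1 T) ^ (l + 1) * (real l + 2) ^ (l + 1)"
    using sum_\<psi> by (intro mult_left_mono power_mono) (auto simp: \<psi>_def intro: sum_nonneg)
  finally show ?thesis .
qed

section \<open>First and second moment of the number of light paths\<close>

lemma count_light_eq_sum_indicator:
  "w \<in> space (WM n) \<Longrightarrow>
     real (count_light n lam C l w) = (\<Sum>p\<in>paths n l. indicator (light_event n lam C p) w)"
  unfolding count_light_def
  by (simp add: sum.inter_filter[OF finite_paths, symmetric] light_event_def indicator_def
      of_bool_def)

context
  fixes n :: nat and lam C :: real and l :: nat
  assumes n: "0 < n"
begin

interpretation W: prob_space "WM n" by (rule prob_space_WM[OF n])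

lemma measurable_count_light: "(\<lambda>w. real (count_light n lam C l w)) \<in> borel_measurable (WM n)"
proof -
  have "(\<lambda>w. \<Sum>p\<in>paths n l. indicator (light_event n lam C p) w :: real) \<in> borel_measurable (WM n)"
    by (intro borel_measurable_sum borel_measurable_indicator sets_light_event) auto
  then show ?thesis by (subst measurable_cong[OF count_light_eq_sum_indicator]) auto
qed

lemma integrable_count_light_sq: "integrable (WM n) (\<lambda>w. (real (count_light n lam C l w))\<^sup>2)"
proof (rule W.integrable_const_bound[where B = "(real (card (paths n l)))\<^sup>2"])
  show "AE w in WM n. norm ((real (count_light n lam C l w))\<^sup>2) \<le> (real (card (paths n l)))\<^sup>2"
    by (auto intro!: power_mono simp: count_light_def card_mono finite_paths)
qed (use measurable_count_light in measurable)

lemma expectation_count_light: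
  "integral\<^sup>L (WM n) (\<lambda>w. real (count_light n lam C l w))
    = (\<Sum>p\<in>paths n l. measure (WM n) (light_event n lam C p))"
proof -
  have "integral\<^sup>L (WM n) (\<lambda>w. real (count_light n lam C l w))
      = integral\<^sup>L (WM n) (\<lambda>w. \<Sum>p\<in>paths n l. indicator (light_event n lam C p) w)"
    by (rule Bochner_Integration.integral_cong) (auto simp: count_light_eq_sum_indicator)
  also have "\<dots> = (\<Sum>p\<in>paths n l. measure (WM n) (light_event n lam C p))"
    by (subst Bochner_Integration.integral_sum)
       (auto intro!: sets_light_event simp: less_top[symmetric] light_event_Int_space)
  finally show ?thesis .
qed

lemma second_moment_count_light:
  "integral\<^sup>L (WM n) (\<lambda>w. (real (count_light n lam C l w))\<^sup>2)
    = (\<Sum>p\<in>paths n l. \<Sum>q\<in>paths n l.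
         measure (WM n) (light_event n lam C p \<inter> light_event n lam C q))"
proof -
  have "integral\<^sup>L (WM n) (\<lambda>w. (real (count_light n lam C l w))\<^sup>2)
      = integral\<^sup>L (WM n) (\<lambda>w. \<Sum>p\<in>paths n l. \<Sum>q\<in>paths n l.
          indicator (light_event n lam C p \<inter> light_event n lam C q) w)"
    by (rule Bochner_Integration.integral_cong)
       (auto simp: count_light_eq_sum_indicator power2_eq_square sum_product indicator_inter_arith)
  also have "\<dots> = (\<Sum>p\<in>paths n l. integral\<^sup>L (WM n) (\<lambda>w. \<Sum>q\<in>paths n l.
      indicator (light_event n lam C p \<inter> light_event n lam C q) w))"
    by (rule Bochner_Integration.integral_sum)
       (auto intro!: Bochner_Integration.integrable_sum sets.Int sets_light_event
         simp: less_top[symmetric])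
  also have "\<dots> = (\<Sum>p\<in>paths n l. \<Sum>q\<in>paths n l.
      integral\<^sup>L (WM n) (indicator (light_event n lam C p \<inter> light_event n lam C q)))"
    by (intro sum.cong refl Bochner_Integration.integral_sum)
       (auto intro!: sets.Int sets_light_event simp: less_top[symmetric])
  also have "\<dots> = (\<Sum>p\<in>paths n l. \<Sum>q\<in>paths n l.
      measure (WM n) (light_event n lam C p \<inter> light_event n lam C q))"
    by (simp add: Int_assoc light_event_Int_space)
  finally show ?thesis .
qed

end

lemma second_moment_count_light_le:
  assumes n: "2 \<le> n" and T: "T = lam * real l - C * sqrt (real l)" "0 \<le> T"
  defines "\<mu> \<equiv> integral\<^sup>L (WM n) (\<lambda>w. real (count_light n lam C l w))"
  shows "integral\<^sup>L (WM n) (\<lambda>w. (real (count_light n lam C l w))\<^sup>2)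
     \<le> \<mu>\<^sup>2 + (max 1 T) ^ (l + 1) * (real l + 2) ^ (l + 1) * \<mu>"
proof -
  have n': "0 < n" "edges n \<noteq> {}" using n edges_nonempty by auto
  define K where "K = (max 1 T) ^ (l + 1) * (real l + 2) ^ (l + 1)"
  define a where "a = 1 - exp (- T / real n)"
  define \<pi> where "\<pi> = (\<lambda>p. measure (WM n) (light_event n lam C p))"
  have a: "0 \<le> a" "a \<le> 1" "a \<le> T / real n"
    unfolding a_def using T(2) exp_ge_add_one_self[of "- T / real n"] by auto
  have \<pi>_nonneg: "0 \<le> \<pi> p" for p unfolding \<pi>_def by simp
  have row: "(\<Sum>q\<in>paths n l. measure (WM n) (light_event n lam C p \<inter> light_event n lam C q))
      \<le> (\<Sum>q\<in>paths n l. \<pi> p * \<pi> q) + \<pi> p * K"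
    if p: "p \<in> paths n l" for p
  proof -
    let ?D = "{q \<in> paths n l. set p \<inter> set q = {}}" and ?O = "{q \<in> paths n l. set p \<inter> set q \<noteq> {}}"
    have "(\<Sum>q\<in>paths n l. measure (WM n) (light_event n lam C p \<inter> light_event n lam C q))
       \<le> (\<Sum>q\<in>paths n l. if set p \<inter> set q = {} then \<pi> p * \<pi> q else \<pi> p * a ^ num_leaving (set p) q)"
      using prob_light_event_disjoint[OF n' p] prob_light_event_overlap[OF n' p _ T]
      by (intro sum_mono) (auto simp: \<pi>_def a_def)
    also have "\<dots> = (\<Sum>q\<in>?D. \<pi> p * \<pi> q) + \<pi> p * (\<Sum>q\<in>?O. a ^ num_leaving (set p) q)"
      by (simp add: sum.If_cases[OF finite_paths] sum_distrib_left Int_def)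
    also have "(\<Sum>q\<in>?D. \<pi> p * \<pi> q) \<le> (\<Sum>q\<in>paths n l. \<pi> p * \<pi> q)"
      by (rule sum_mono2[OF finite_paths]) (auto simp: \<pi>_nonneg)
    also have "(\<Sum>q\<in>?O. a ^ num_leaving (set p) q) \<le> K"
      unfolding K_def by (rule sum_overlapping_paths_le[OF n'(1) p a T(2)])
    finally show ?thesis using \<pi>_nonneg[of p] by (simp add: mult_left_mono)
  qed
  have "(\<Sum>p\<in>paths n l. \<Sum>q\<in>paths n l. measure (WM n) (light_event n lam C p \<inter> light_event n lam C q))
      \<le> (\<Sum>p\<in>paths n l. (\<Sum>q\<in>paths n l. \<pi> p * \<pi> q) + \<pi> p * K)"
    by (rule sum_mono) (rule row)
  also have "\<dots> = \<mu>\<^sup>2 + K * \<mu>"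
    unfolding \<mu>_def expectation_count_light[OF n'(1)] \<pi>_def
    by (simp add: sum.distrib power2_eq_square sum_product sum_distrib_left mult.commute)
  finally show ?thesis
    unfolding K_def second_moment_count_light[OF n'(1)] .
qed

lemma one_minus_exp_ge: "0 \<le> (x::real) \<Longrightarrow> x \<le> 1 \<Longrightarrow> x / 2 \<le> 1 - exp (- x)"
proof -
  assume x: "0 \<le> x" "x \<le> 1"
  have "exp (- x) \<le> 1 / (1 + x)" using exp_ge_add_one_self[of x] x by (simp add: exp_minus field_simps)
  moreover have "x / 2 \<le> 1 - 1 / (1 + x)" using x mult_left_le[of x x] by (simp add: field_simps)
  ultimately show ?thesis by linarith
qed

lemma expectation_count_light_ge:
  assumes l: "0 < l" "2 * l \<le> n"
    and T: "T = lam * real l - C * sqrt (real l)" "0 \<le> T" "T / real l \<le> real n"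
  shows "real n * ((T / (4 * real l)) ^ l / 2) \<le> integral\<^sup>L (WM n) (\<lambda>w. real (count_light n lam C l w))"
proof -
  have n: "0 < n" "edges n \<noteq> {}" using l edges_nonempty[of n] by auto
  define x where "x = T / real l / real n"
  have "x \<le> real n / real n" unfolding x_def using T(3) by (rule divide_right_mono) simp
  then have x: "0 \<le> x" "x \<le> 1" using T(2) n(1) by (auto simp: x_def)
  have prob_ge: "(x / 2) ^ l \<le> measure (WM n) (light_event n lam C p)" if "p \<in> paths n l" for p
  proof -
    have "(x / 2) ^ l \<le> (1 - exp (- x)) ^ l"
      by (rule power_mono[OF one_minus_exp_ge[OF x]]) (use x in simp)
    also have "\<dots> = (1 - exp (- (T / real l) / real n)) ^ l" by (simp add: x_def)
    also have "\<dots> \<le> measure (WM n) (light_event n lam C p)"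
      by (rule prob_light_event_ge[OF n that l(1) T(1,2)])
    finally show ?thesis .
  qed
  have card_ge: "(real n / 2) ^ (l + 1) \<le> real (card (paths n l))"
  proof -
    have "(real n / 2) ^ (l + 1) \<le> (real n - real l) ^ (l + 1)"
      by (rule power_mono) (use l in auto)
    also have "\<dots> \<le> real (card (paths n l))" by (rule card_paths_ge) (use l in auto)
    finally show ?thesis .
  qed
  have "real n * ((T / (4 * real l)) ^ l / 2) = (real n / 2) * ((real n / 2) * (x / 2)) ^ l"
    unfolding x_def using n(1) l(1) by (simp add: field_simps)
  also have "\<dots> = (real n / 2) ^ (l + 1) * (x / 2) ^ l"
    by (simp only: power_mult_distrib power_add power_one_right mult_ac)
  also have "\<dots> \<le> real (card (paths n l)) * (x / 2) ^ l"
    by (rule mult_right_mono[OF card_ge]) (use x in simp)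
  also have "\<dots> = (\<Sum>p\<in>paths n l. (x / 2) ^ l)" by simp
  also have "\<dots> \<le> (\<Sum>p\<in>paths n l. measure (WM n) (light_event n lam C p))"
    by (rule sum_mono[OF prob_ge])
  finally show ?thesis unfolding expectation_count_light[OF n(1)] .
qed

section \<open>Second moment method\<close>

lemma (in prob_space) square_expectation_le:
  fixes X :: "'a \<Rightarrow> real"
  assumes "random_variable borel X" "integrable M (\<lambda>x. (X x)\<^sup>2)"
  shows "(expectation X)\<^sup>2 \<le> expectation (\<lambda>x. (X x)\<^sup>2)"
  using variance_eq[OF square_integrable_imp_integrable[OF assms] assms(2)] variance_positive[of X]
  by simp

lemma (in prob_space) prob_ge_twice_expectation_le:
  fixes X :: "'a \<Rightarrow> real"
  assumes X: "random_variable borel X" and X2: "integrable M (\<lambda>x. (X x)\<^sup>2)"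
    and pos: "0 < expectation X"
    and second: "expectation (\<lambda>x. (X x)\<^sup>2) \<le> (expectation X)\<^sup>2 + K * expectation X"
  shows "prob {x \<in> space M. 2 * expectation X \<le> X x} \<le> K / expectation X"
proof -
  let ?\<mu> = "expectation X"
  have "{x \<in> space M. ?\<mu> \<le> \<bar>X x - ?\<mu>\<bar>} \<in> sets M"
    using X by measurable
  then have "prob {x \<in> space M. 2 * ?\<mu> \<le> X x} \<le> prob {x \<in> space M. ?\<mu> \<le> \<bar>X x - ?\<mu>\<bar>}"
    by (rule finite_measure_mono[rotated]) auto
  also have "\<dots> \<le> variance X / ?\<mu>\<^sup>2"
    by (rule Chebyshev_inequality[OF X X2 pos])
  also have "variance X = expectation (\<lambda>x. (X x)\<^sup>2) - ?\<mu>\<^sup>2"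
    by (rule variance_eq[OF square_integrable_imp_integrable[OF X X2] X2])
  also have "(expectation (\<lambda>x. (X x)\<^sup>2) - ?\<mu>\<^sup>2) / ?\<mu>\<^sup>2 \<le> K * ?\<mu> / ?\<mu>\<^sup>2"
    using second by (intro divide_right_mono) auto
  also have "K * ?\<mu> / ?\<mu>\<^sup>2 = K / ?\<mu>" using pos by (simp add: power2_eq_square)
  finally show ?thesis .
qed

lemma asymp_equiv_square_if_second_moment_le:
  fixes f \<mu> :: "nat \<Rightarrow> real"
  assumes bounds: "eventually (\<lambda>n. (\<mu> n)\<^sup>2 \<le> f n \<and> f n \<le> (\<mu> n)\<^sup>2 + K * \<mu> n) at_top"
    and \<mu>: "filterlim \<mu> at_top at_top"
  shows "f \<sim>[at_top] (\<lambda>n. (\<mu> n)\<^sup>2)"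
proof (rule asymp_equivI')
  have K_over_\<mu>: "((\<lambda>n. K / \<mu> n) \<longlongrightarrow> 0) at_top"
    by (rule tendsto_divide_0[OF tendsto_const filterlim_at_top_imp_at_infinity[OF \<mu>]])
  have ratio: "eventually (\<lambda>n. 1 \<le> f n / (\<mu> n)\<^sup>2 \<and> f n / (\<mu> n)\<^sup>2 \<le> 1 + K / \<mu> n) at_top"
    using bounds filterlim_at_top_dense[THEN iffD1, OF \<mu>, rule_format, of 0]
  proof eventually_elim
    case (elim n)
    then have "0 < (\<mu> n)\<^sup>2" by simp
    with elim show ?case by (simp add: field_simps power2_eq_square)
  qed
  show "((\<lambda>n. f n / (\<mu> n)\<^sup>2) \<longlongrightarrow> 1) at_top"
  proof (rule tendsto_sandwich[where f = "\<lambda>_. 1" and h = "\<lambda>n. 1 + K / \<mu> n"])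
    show "eventually (\<lambda>n. 1 \<le> f n / (\<mu> n)\<^sup>2) at_top"
      using ratio by (rule eventually_mono) simp
    show "eventually (\<lambda>n. f n / (\<mu> n)\<^sup>2 \<le> 1 + K / \<mu> n) at_top"
      using ratio by (rule eventually_mono) simp
    show "((\<lambda>n. 1 + K / \<mu> n) \<longlongrightarrow> 1) at_top"
      using tendsto_add[OF tendsto_const K_over_\<mu>, of 1] by simp
  qed simp
qed

lemma filterlim_expectation_count_light:
  assumes T: "0 < lam * real l - C * sqrt (real l)" and l: "0 < l"
  shows "filterlim (\<lambda>n. integral\<^sup>L (WM n) (\<lambda>w. real (count_light n lam C l w))) at_top at_top"
proof -
  define T where "T = lam * real l - C * sqrt (real l)"
  define c where "c = (T / (4 * real l)) ^ l / 2"
  have T0: "0 < T" using T unfolding T_def .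
  have c0: "0 < c" unfolding c_def using T0 l by simp
  have "eventually (\<lambda>n. 2 * l \<le> n \<and> T / real l \<le> real n) at_top"
    using eventually_ge_at_top[of "2 * l"] filterlim_real_sequentially[
        THEN filterlim_at_top_dense[THEN iffD1], rule_format, of "T / real l"]
    by eventually_elim (auto simp: less_imp_le)
  then have "eventually (\<lambda>n. real n * c \<le> integral\<^sup>L (WM n) (\<lambda>w. real (count_light n lam C l w))) at_top"
  proof eventually_elim
    case (elim n)
    then show ?case unfolding c_def
      by (intro expectation_count_light_ge[OF l _ T_def]) (use T0 in auto)
  qed
  then show ?thesis
    by (rule filterlim_at_top_mono[OF filterlim_at_top_mult_tendsto_pos[OF tendsto_const c0
          filterlim_real_sequentially]])
qed

lemma count_light_concentration:
  assumes T: "0 < lam * real l - C * sqrt (real l)" and l: "0 < l"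
  shows "(\<lambda>n. integral\<^sup>L (WM n) (\<lambda>w. (real (count_light n lam C l w))\<^sup>2))
           \<sim>[at_top] (\<lambda>n. (integral\<^sup>L (WM n) (\<lambda>w. real (count_light n lam C l w)))\<^sup>2)
       \<and> ((\<lambda>n. measure (WM n) {w \<in> space (WM n). real (count_light n lam C l w)
                 \<ge> 2 * integral\<^sup>L (WM n) (\<lambda>w. real (count_light n lam C l w))}) \<longlongrightarrow> 0) at_top"
proof -
  define T where "T = lam * real l - C * sqrt (real l)"
  define K where "K = (max 1 T) ^ (l + 1) * (real l + 2) ^ (l + 1)"
  define \<mu> where "\<mu> = (\<lambda>n. integral\<^sup>L (WM n) (\<lambda>w. real (count_light n lam C l w)))"
  define f where "f = (\<lambda>n. integral\<^sup>L (WM n) (\<lambda>w. (real (count_light n lam C l w))\<^sup>2))"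
  have \<mu>: "filterlim \<mu> at_top at_top"
    unfolding \<mu>_def by (rule filterlim_expectation_count_light[OF T l])
  have bounds: "eventually (\<lambda>n. 0 < \<mu> n \<and> (\<mu> n)\<^sup>2 \<le> f n \<and> f n \<le> (\<mu> n)\<^sup>2 + K * \<mu> n) at_top"
    using eventually_ge_at_top[of 2] filterlim_at_top_dense[THEN iffD1, OF \<mu>, rule_format, of 0]
  proof eventually_elim
    case (elim n)
    interpret prob_space "WM n" by (rule prob_space_WM) (use elim in simp)
    have "(\<mu> n)\<^sup>2 \<le> f n" unfolding f_def \<mu>_def
      by (rule square_expectation_le[OF measurable_count_light integrable_count_light_sq])
         (use elim in simp_all)
    moreover have "f n \<le> (\<mu> n)\<^sup>2 + K * \<mu> n" unfolding f_def \<mu>_def K_def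
      by (rule second_moment_count_light_le[OF elim(1) T_def]) (use T in \<open>simp add: T_def\<close>)
    ultimately show ?case using elim by simp
  qed
  have "f \<sim>[at_top] (\<lambda>n. (\<mu> n)\<^sup>2)"
    by (rule asymp_equiv_square_if_second_moment_le[where K = K, OF eventually_mono[OF bounds] \<mu>])
       simp
  moreover have "((\<lambda>n. measure (WM n) {w \<in> space (WM n). real (count_light n lam C l w) \<ge> 2 * \<mu> n})
      \<longlongrightarrow> 0) at_top"
  proof (rule tendsto_sandwich[where f = "\<lambda>_. 0" and h = "\<lambda>n. K / \<mu> n"])
    show "eventually (\<lambda>n. measure (WM n) {w \<in> space (WM n). real (count_light n lam C l w) \<ge> 2 * \<mu> n}
        \<le> K / \<mu> n) at_top"
      using bounds eventually_ge_at_top[of 2]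
    proof eventually_elim
      case (elim n)
      interpret prob_space "WM n" by (rule prob_space_WM) (use elim in simp)
      show ?case unfolding \<mu>_def
        by (rule prob_ge_twice_expectation_le[OF measurable_count_light integrable_count_light_sq])
           (use elim in \<open>simp_all add: \<mu>_def f_def\<close>)
    qed
    show "((\<lambda>n. K / \<mu> n) \<longlongrightarrow> 0) at_top"
      by (rule tendsto_divide_0[OF tendsto_const filterlim_at_top_imp_at_infinity[OF \<mu>]])
  qed simp_all
  ultimately show ?thesis unfolding f_def \<mu>_def by (rule conjI)
qed

theorem mainTheorem3:
  fixes \<eta> \<eta>' :: real
  assumes "0 < \<eta>" and "\<eta> < \<eta>'" and "\<eta>' \<le> 1/8"
  shows "(\<lambda>n. integral\<^sup>L (WM n)
              (\<lambda>w. (real (count_light n (exp (-1) + \<eta>) 1 (nat \<lfloor>1/\<eta>'\<rfloor>) w))\<^sup>2))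
           \<sim>[at_top]
         (\<lambda>n. (integral\<^sup>L (WM n)
              (\<lambda>w. real (count_light n (exp (-1) + \<eta>) 1 (nat \<lfloor>1/\<eta>'\<rfloor>) w)))\<^sup>2)
       \<and> ((\<lambda>n. measure (WM n)
              {w \<in> space (WM n).
                 real (count_light n (exp (-1) + \<eta>) 1 (nat \<lfloor>1/\<eta>'\<rfloor>) w)
                 \<ge> 2 * integral\<^sup>L (WM n)
                     (\<lambda>w. real (count_light n (exp (-1) + \<eta>) 1 (nat \<lfloor>1/\<eta>'\<rfloor>) w))})
           \<longlongrightarrow> 0) at_top"
proof (rule count_light_concentration)
  define l where "l = nat \<lfloor>1/\<eta>'\<rfloor>"
  have "8 \<le> 1 / \<eta>'" using assms by (simp add: field_simps)
  then have l8: "8 \<le> l" unfolding l_def by linarith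
  then show "0 < nat \<lfloor>1/\<eta>'\<rfloor>" unfolding l_def[symmetric] by simp
  \<comment> \<open>\<open>\<surd>l \<le> l/e\<close> because \<open>e < 2.72 \<le> \<surd>8\<close>.\<close>
  have "exp 1 \<le> sqrt (real l)"
    using e_less_272 real_le_rsqrt[of "272 / 100" "real l"] l8 by (simp add: power2_eq_square)
  then have "exp 1 * sqrt (real l) \<le> real l"
    using mult_right_mono[of "exp 1" "sqrt (real l)" "sqrt (real l)"] by simp
  then have "sqrt (real l) \<le> exp (-1) * real l"
    by (simp add: exp_minus field_simps)
  moreover have "0 < \<eta> * real l" using assms l8 by simp
  ultimately show "0 < (exp (-1) + \<eta>) * real (nat \<lfloor>1/\<eta>'\<rfloor>) - 1 * sqrt (real (nat \<lfloor>1/\<eta>'\<rfloor>))"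
    unfolding l_def by (simp add: algebra_simps)
qed

end
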